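(* For every formula $\delta\in\mathcal{L}(\Rightarrow)$: (1) $\delta^\dagger\in\mathcal{L}$; and (2) for every model $\mathcal{M}=\langle W,V\rangle$, every $w\in W$ and every $X\subseteq W$, $\mathcal{M},w,X\vDash\delta$ if and only if $\mathcal{M},w,X\vDash\delta^\dagger$, where $\vDash$ is the Kolodny–MacFarlane semantics.
   Context: $\mathcal{L}(\Rightarrow)$: $\varphi::= p\mid \neg\varphi\mid (\varphi\wedge\varphi)\mid \Box\varphi \mid (\varphi\Rightarrow\varphi)$ over a fixed set of propositional variables; $\vee,\to,\bot$ as usual, $\Diamond\varphi:=\neg\Box\neg\varphi$; $\mathcal{L}$ is the $\Rightarrow$-free fragment; nonmodal formulas are those of $\mathcal{L}$ without $\Box$. Models $\mathcal{M}=\langle W,V\rangle$: $W$ nonempty, $V(p)\subseteq W$. Kolodny–MacFarlane semantics at $\mathcal{M},w,X$ ($w\in W$, $X\subseteq W$): $p$ true iff $w\in V(p)$; $\neg,\wedge$ Boolean; $\Box\varphi$ true iff $\varphi$ is true at $\mathcal{M},v,X$ for all $v\in X$; $\varphi\Rightarrow\psi$ true iff $\mathcal{M},w,X'\vDash\Box\psi$ for every $X'$ with (i) $X'\subseteq X$, (ii) $X'\subseteq\llbracket\varphi\rrbracket^{\mathcal{M},X'}$, (iii) no $X''$ satisfying (i),(ii) has $X'\subsetneq X''$; here $\llbracket\varphi\rrbracket^{\mathcal{M},Y}=\{v\in Y\mid \mathcal{M},v,Y\vDash\varphi\}$. Every $\chi\in\mathcal{L}$ is provably equivalent in the modal logic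 K45 to a formula in disjunctive normal form $\bigvee_{i}(\pi^i\wedge\Box\beta^i\wedge\Diamond\beta^i_1\wedge\dots\wedge\Diamond\beta^i_{m_i})$ with all $\pi^i,\beta^i,\beta^i_j$ nonmodal; $\chi^{NF}$ denotes a fixed such formula for $\chi$. The map $(\cdot)^*$: given $\lambda=\Theta\Rightarrow\Omega$ with $\Theta=\bigvee_{i\in I}\theta_i$, $\Omega=\bigvee_{j\in J}\omega_j$ ($I,J$ finite), $\theta_i=\varphi_i\wedge\Box\psi_i\wedge\bigwedge_{n\in D_i}\Diamond\chi_n$, $\omega_j=\alpha_j\wedge\Box\beta_j\wedge\bigwedge_{m\in E_j}\Diamond\gamma_m$, all of $\varphi_i,\psi_i,\chi_n,\alpha_j,\beta_j,\gamma_m$ nonmodal, define for $K\subseteq I$: $\mathtt{info}_K:=(\bigvee_{k\in K}\varphi_k)\wedge\bigwedge_{k\in K}\psi_k$; $\mathtt{good}_K:=\bigwedge_{k\in K}\bigwedge_{n\in D_k}\Diamond(\mathtt{info}_K\wedge\chi_n)$; $\mathtt{max}_K:=\mathtt{good}_K\wedge\bigwedge_{L\subseteq I}\big((\Box(\mathtt{info}_K\to\mathtt{info}_L)\wedge\Diamond(\neg\mathtt{info}_K\wedge\mathtt{info}_L))\to\neg\mathtt{good}_L\big)$; for $S\subseteq J$: $\mathtt{state}_S:=\bigwedge_{s\in S}\alpha_s\wedge\bigwedge_{s\in J\setminus S}\neg\alpha_s$; and $\lambda^*:=\bigwedge_{K\subseteq I}\Big(\mathtt{max}_K\to\Box\big(\mathtt{info}_K\to\bigwedge_{S\subseteq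 J}(\mathtt{state}_S\to\bigvee_{s\in S}(\Box(\mathtt{info}_K\to\beta_s)\wedge\bigwedge_{m\in E_s}\Diamond(\mathtt{info}_K\wedge\gamma_m)))\big)\Big)$ (empty disjunction is $\bot$, empty conjunction is $\top$). The translation $(\cdot)^\dagger$: $p^\dagger=p$; $(\neg\varphi)^\dagger=\neg\varphi^\dagger$; $(\varphi\wedge\psi)^\dagger=\varphi^\dagger\wedge\psi^\dagger$; $(\Box\varphi)^\dagger=\Box\varphi^\dagger$; $(\varphi\Rightarrow\psi)^\dagger=\big((\varphi^\dagger)^{NF}\Rightarrow(\psi^\dagger)^{NF}\big)^*$. *)

theory Defs
  imports Main
begin

datatype 'p fm = Atom 'p | Neg "'p fm" | Conj "'p fm" "'p fm" | Box "'p fm" | Cond "'p fm" "'p fm"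

definition Imp :: "'p fm \<Rightarrow> 'p fm \<Rightarrow> 'p fm" where
  "Imp a b = Neg (Conj a (Neg b))"
definition Or :: "'p fm \<Rightarrow> 'p fm \<Rightarrow> 'p fm" where
  "Or a b = Neg (Conj (Neg a) (Neg b))"
definition Iff :: "'p fm \<Rightarrow> 'p fm \<Rightarrow> 'p fm" where
  "Iff a b = Conj (Imp a b) (Imp b a)"
definition Dia :: "'p fm \<Rightarrow> 'p fm" where
  "Dia a = Neg (Box (Neg a))"
definition Bot :: "'p fm" where
  "Bot = Conj (Atom undefined) (Neg (Atom undefined))"
definition Top :: "'p fm" where
  "Top = Neg Bot"

fun bigconj :: "'p fm list \<Rightarrow> 'p fm" where
  "bigconj [] = Top"
| "bigconj [a] = a"
| "bigconj (a # as) = Conj a (bigconj as)"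

fun bigdisj :: "'p fm list \<Rightarrow> 'p fm" where
  "bigdisj [] = Bot"
| "bigdisj [a] = a"
| "bigdisj (a # as) = Or a (bigdisj as)"

primrec in_L :: "'p fm \<Rightarrow> bool" where
  "in_L (Atom p) = True"
| "in_L (Neg a) = in_L a"
| "in_L (Conj a b) = (in_L a \<and> in_L b)"
| "in_L (Box a) = in_L a"
| "in_L (Cond a b) = False"

primrec nonmodal :: "'p fm \<Rightarrow> bool" where
  "nonmodal (Atom p) = True"
| "nonmodal (Neg a) = nonmodal a"
| "nonmodal (Conj a b) = (nonmodal a \<and> nonmodal b)"
| "nonmodal (Box a) = False"
| "nonmodal (Cond a b) = False"

text \<open>A model is a pair (W, V); the world set W only constrains w and X in the theorem.
  sat V w X phi means M, w, X satisfies phi.\<close>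
primrec sat :: "('p \<Rightarrow> 'w set) \<Rightarrow> 'w \<Rightarrow> 'w set \<Rightarrow> 'p fm \<Rightarrow> bool" where
  "sat V w X (Atom p) = (w \<in> V p)"
| "sat V w X (Neg a) = (\<not> sat V w X a)"
| "sat V w X (Conj a b) = (sat V w X a \<and> sat V w X b)"
| "sat V w X (Box a) = (\<forall>v\<in>X. sat V v X a)"
| "sat V w X (Cond a b) =
     (\<forall>X'. (X' \<subseteq> X \<and> X' \<subseteq> {v \<in> X'. sat V v X' a}
            \<and> \<not> (\<exists>X''. X'' \<subseteq> X \<and> X'' \<subseteq> {v \<in> X''. sat V v X'' a} \<and> X' \<subset> X''))
          \<longrightarrow> (\<forall>v\<in>X'. sat V v X' b))"

primrec peval :: "('p fm \<Rightarrow> bool) \<Rightarrow> 'p fm \<Rightarrow> bool" where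
  "peval g (Atom p) = g (Atom p)"
| "peval g (Neg a) = (\<not> peval g a)"
| "peval g (Conj a b) = (peval g a \<and> peval g b)"
| "peval g (Box a) = g (Box a)"
| "peval g (Cond a b) = g (Cond a b)"

definition taut :: "'p fm \<Rightarrow> bool" where
  "taut a = (\<forall>g. peval g a)"

inductive K45 :: "'p fm \<Rightarrow> bool" where
  Taut: "in_L a \<Longrightarrow> taut a \<Longrightarrow> K45 a"
| AxK: "in_L a \<Longrightarrow> in_L b \<Longrightarrow> K45 (Imp (Box (Imp a b)) (Imp (Box a) (Box b)))"
| Ax4: "in_L a \<Longrightarrow> K45 (Imp (Box a) (Box (Box a)))"
| Ax5: "in_L a \<Longrightarrow> K45 (Imp (Dia a) (Box (Dia a)))"
| MP: "K45 a \<Longrightarrow> K45 (Imp a b) \<Longrightarrow> K45 b"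
| Nec: "K45 a \<Longrightarrow> K45 (Box a)"

text \<open>A DNF is a list of disjuncts (pi, beta, [beta_1,...,beta_m]) standing for
  pi \<and> Box beta \<and> Dia beta_1 \<and> ... \<and> Dia beta_m.\<close>
type_synonym 'p dnf = "('p fm \<times> 'p fm \<times> 'p fm list) list"

definition disjunct_fm :: "'p fm \<times> 'p fm \<times> 'p fm list \<Rightarrow> 'p fm" where
  "disjunct_fm d = (case d of (pi, beta, bs) \<Rightarrow>
      Conj pi (Conj (Box beta) (bigconj (map Dia bs))))"

definition dnf_fm :: "'p dnf \<Rightarrow> 'p fm" where
  "dnf_fm ds = bigdisj (map disjunct_fm ds)"

definition dnf_nonmodal :: "'p dnf \<Rightarrow> bool" where
  "dnf_nonmodal ds = (\<forall>(pi, beta, bs) \<in> set ds.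
      nonmodal pi \<and> nonmodal beta \<and> (\<forall>b\<in>set bs. nonmodal b))"

definition is_NF :: "('p fm \<Rightarrow> 'p dnf) \<Rightarrow> bool" where
  "is_NF nf = (\<forall>chi. in_L chi \<longrightarrow> dnf_nonmodal (nf chi) \<and> K45 (Iff chi (dnf_fm (nf chi))))"

text \<open>Index subsets K \<subseteq> I are represented by sublists (subseqs) of [0..<length].\<close>

definition info :: "'p dnf \<Rightarrow> nat list \<Rightarrow> 'p fm" where
  "info ts K = Conj (bigdisj (map (\<lambda>k. fst (ts ! k)) K))
                    (bigconj (map (\<lambda>k. fst (snd (ts ! k))) K))"

definition good :: "'p dnf \<Rightarrow> nat list \<Rightarrow> 'p fm" where
  "good ts K = bigconj (concat (map (\<lambda>k. map (\<lambda>c. Dia (Conj (info ts K) c)) (snd (snd (ts ! k)))) K))"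

definition maxf :: "'p dnf \<Rightarrow> nat list \<Rightarrow> 'p fm" where
  "maxf ts K = Conj (good ts K)
     (bigconj (map (\<lambda>L. Imp (Conj (Box (Imp (info ts K) (info ts L)))
                                  (Dia (Conj (Neg (info ts K)) (info ts L))))
                             (Neg (good ts L)))
                   (subseqs [0..<length ts])))"

definition state :: "'p dnf \<Rightarrow> nat list \<Rightarrow> 'p fm" where
  "state os S = Conj (bigconj (map (\<lambda>s. fst (os ! s)) S))
     (bigconj (map (\<lambda>s. Neg (fst (os ! s))) (filter (\<lambda>s. s \<notin> set S) [0..<length os])))"

definition star :: "'p dnf \<Rightarrow> 'p dnf \<Rightarrow> 'p fm" where
  "star ts os = bigconj (map (\<lambda>K.
      Imp (maxf ts K)
        (Box (Imp (info ts K)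
          (bigconj (map (\<lambda>S.
             Imp (state os S)
               (bigdisj (map (\<lambda>s. Conj (Box (Imp (info ts K) (fst (snd (os ! s)))))
                                       (bigconj (map (\<lambda>g. Dia (Conj (info ts K) g)) (snd (snd (os ! s))))))
                          S)))
             (subseqs [0..<length os]))))))
    (subseqs [0..<length ts]))"

primrec dagger :: "('p fm \<Rightarrow> 'p dnf) \<Rightarrow> 'p fm \<Rightarrow> 'p fm" where
  "dagger nf (Atom p) = Atom p"
| "dagger nf (Neg a) = Neg (dagger nf a)"
| "dagger nf (Conj a b) = Conj (dagger nf a) (dagger nf b)"
| "dagger nf (Box a) = Box (dagger nf a)"
| "dagger nf (Cond a b) = star (nf (dagger nf a)) (nf (dagger nf b))"

end

theory Submission
  imports Defs
begin

text \<open>Nonmodal formulas do not depend on the information state, so a normal form \<open>\<Theta>\<close> with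
  nonmodal components can be read through the truth sets of its components. A state \<open>Y\<close>
  satisfies \<open>Y \<subseteq> \<lbrakk>\<Theta>\<rbrakk>\<^sup>Y\<close> iff \<open>Y \<subseteq> info\<^sub>K\<close> and \<open>good\<^sub>K\<close> holds in \<open>Y\<close> for some index set \<open>K\<close>;
  hence the maximal such subsets of \<open>X\<close> are exactly the sets \<open>X \<inter> info\<^sub>K\<close> with \<open>max\<^sub>K\<close> true
  at \<open>X\<close>. The conditional then says that \<open>\<Omega>\<close> holds throughout each of these sets, and the
  formulas \<open>state\<^sub>S\<close> let \<open>\<lambda>\<^sup>*\<close> quantify over the disjuncts of \<open>\<Omega>\<close> whose nonmodal part is
  true at a given world. Soundness of K45 transfers this from normal forms to arbitrary
  formulas, and induction on \<open>\<delta>\<close> finishes the proof.\<close>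

lemma sat_bigconj [simp]: "sat V w X (bigconj \<phi>s) \<longleftrightarrow> (\<forall>\<phi>\<in>set \<phi>s. sat V w X \<phi>)"
  by (induction \<phi>s rule: bigconj.induct) (auto simp: Top_def Bot_def)

lemma sat_bigdisj [simp]: "sat V w X (bigdisj \<phi>s) \<longleftrightarrow> (\<exists>\<phi>\<in>set \<phi>s. sat V w X \<phi>)"
  by (induction \<phi>s rule: bigdisj.induct) (auto simp: Or_def Bot_def)

lemma sat_Imp [simp]: "sat V w X (Imp \<phi> \<psi>) \<longleftrightarrow> (sat V w X \<phi> \<longrightarrow> sat V w X \<psi>)"
  by (simp add: Imp_def)

lemma sat_Iff [simp]: "sat V w X (Iff \<phi> \<psi>) \<longleftrightarrow> (sat V w X \<phi> \<longleftrightarrow> sat V w X \<psi>)"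
  by (auto simp: Iff_def)

lemma sat_Dia [simp]: "sat V w X (Dia \<phi>) \<longleftrightarrow> (\<exists>v\<in>X. sat V v X \<phi>)"
  by (simp add: Dia_def)

lemma peval_sat: "peval (sat V w X) \<phi> = sat V w X \<phi>"
  by (induction \<phi>) auto

lemma K45_sound: "K45 \<phi> \<Longrightarrow> sat V w X \<phi>"
proof (induction arbitrary: w X rule: K45.induct)
  case (Taut \<phi>)
  then show ?case
    using peval_sat[of V w X \<phi>] by (simp add: taut_def)
qed auto

lemma in_L_bigconj [simp]: "in_L (bigconj \<phi>s) \<longleftrightarrow> (\<forall>\<phi>\<in>set \<phi>s. in_L \<phi>)"
  by (induction \<phi>s rule: bigconj.induct) (auto simp: Top_def Bot_def)

lemma in_L_bigdisj [simp]: "in_L (bigdisj \<phi>s) \<longleftrightarrow> (\<forall>\<phi>\<in>set \<phi>s. in_L \<phi>)"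
  by (induction \<phi>s rule: bigdisj.induct) (auto simp: Or_def Bot_def)

lemma nonmodal_bigconj [simp]: "nonmodal (bigconj \<phi>s) \<longleftrightarrow> (\<forall>\<phi>\<in>set \<phi>s. nonmodal \<phi>)"
  by (induction \<phi>s rule: bigconj.induct) (auto simp: Top_def Bot_def)

lemma nonmodal_bigdisj [simp]: "nonmodal (bigdisj \<phi>s) \<longleftrightarrow> (\<forall>\<phi>\<in>set \<phi>s. nonmodal \<phi>)"
  by (induction \<phi>s rule: bigdisj.induct) (auto simp: Or_def Bot_def)

lemma nonmodal_imp_in_L: "nonmodal \<phi> \<Longrightarrow> in_L \<phi>"
  by (induction \<phi>) auto

lemma in_L_Imp [simp]: "in_L (Imp \<phi> \<psi>) \<longleftrightarrow> in_L \<phi> \<and> in_L \<psi>"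
  by (simp add: Imp_def)

lemma in_L_Dia [simp]: "in_L (Dia \<phi>) \<longleftrightarrow> in_L \<phi>"
  by (simp add: Dia_def)

abbreviation index_lists :: "nat \<Rightarrow> nat list set" where
  "index_lists n \<equiv> set (subseqs [0..<n])"

lemma index_lists_bound: "K \<in> index_lists n \<Longrightarrow> k \<in> set K \<Longrightarrow> k < n"
  using imageI[of K "index_lists n" set] subseqs_powset[of "[0..<n]"] by auto

lemma index_lists_exhaust:
  assumes "A \<subseteq> {..<n}"
  obtains K where "K \<in> index_lists n" "set K = A"
proof -
  have "A \<in> set ` index_lists n"
    using assms by (intro subset_subseqs) auto
  then show ?thesis
    using that by blast
qed

text \<open>A normal form with nonmodal components is modelled semantically by the list of triples
  \<open>(P, B, Gs)\<close> of truth sets of its disjuncts \<open>\<pi> \<and> \<box>\<beta> \<and> \<diamond>\<gamma>\<^sub>1 \<and> \<dots>\<close>; as in the definition of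
  \<open>\<lambda>\<^sup>*\<close>, index subsets \<open>K \<subseteq> I\<close> are represented by members of \<open>index_lists\<close>.\<close>

definition modal_part_holds :: "'a set \<times> 'a set \<times> 'a set list \<Rightarrow> 'a set \<Rightarrow> bool" where
  "modal_part_holds d Y \<longleftrightarrow> Y \<subseteq> fst (snd d) \<and> (\<forall>G\<in>set (snd (snd d)). Y \<inter> G \<noteq> {})"

definition dnf_holds :: "('a set \<times> 'a set \<times> 'a set list) list \<Rightarrow> 'a \<Rightarrow> 'a set \<Rightarrow> bool" where
  "dnf_holds ds v Y \<longleftrightarrow> (\<exists>j<length ds. v \<in> fst (ds ! j) \<and> modal_part_holds (ds ! j) Y)"

definition supports :: "('a set \<times> 'a set \<times> 'a set list) list \<Rightarrow> 'a set \<Rightarrow> bool" where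
  "supports ds Y \<longleftrightarrow> (\<forall>v\<in>Y. dnf_holds ds v Y)"

definition maximal_support :: "('a set \<times> 'a set \<times> 'a set list) list \<Rightarrow> 'a set \<Rightarrow> 'a set \<Rightarrow> bool" where
  "maximal_support ds X Y \<longleftrightarrow>
     Y \<subseteq> X \<and> supports ds Y \<and> \<not> (\<exists>Y'. Y' \<subseteq> X \<and> supports ds Y' \<and> Y \<subset> Y')"

definition info_set :: "('a set \<times> 'a set \<times> 'a set list) list \<Rightarrow> nat list \<Rightarrow> 'a set" where
  "info_set ds K = (\<Union>k\<in>set K. fst (ds ! k)) \<inter> (\<Inter>k\<in>set K. fst (snd (ds ! k)))"

definition good_at :: "('a set \<times> 'a set \<times> 'a set list) list \<Rightarrow> nat list \<Rightarrow> 'a set \<Rightarrow> bool" where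
  "good_at ds K X \<longleftrightarrow> (\<forall>k\<in>set K. \<forall>G\<in>set (snd (snd (ds ! k))). X \<inter> info_set ds K \<inter> G \<noteq> {})"

definition max_at :: "('a set \<times> 'a set \<times> 'a set list) list \<Rightarrow> nat list \<Rightarrow> 'a set \<Rightarrow> bool" where
  "max_at ds K X \<longleftrightarrow> good_at ds K X \<and>
     (\<forall>L\<in>index_lists (length ds). X \<inter> info_set ds K \<subset> X \<inter> info_set ds L \<longrightarrow> \<not> good_at ds L X)"

lemma supports_iff_good_at:
  "supports ds Y \<longleftrightarrow> (\<exists>K\<in>index_lists (length ds). Y \<subseteq> info_set ds K \<and> good_at ds K Y)"
proof
  assume Y: "supports ds Y"
  obtain K where K: "K \<in> index_lists (length ds)" "set K = {k. k < length ds \<and> modal_part_holds (ds ! k) Y}"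
    by (rule index_lists_exhaust[of "{k. k < length ds \<and> modal_part_holds (ds ! k) Y}"]) auto
  have "Y \<subseteq> info_set ds K"
    using Y K(2) by (fastforce simp: supports_def dnf_holds_def info_set_def modal_part_holds_def)
  then have "good_at ds K Y"
    using K(2) by (fastforce simp: good_at_def modal_part_holds_def)
  with \<open>Y \<subseteq> info_set ds K\<close> K(1) show "\<exists>K\<in>index_lists (length ds). Y \<subseteq> info_set ds K \<and> good_at ds K Y"
    by blast
next
  assume "\<exists>K\<in>index_lists (length ds). Y \<subseteq> info_set ds K \<and> good_at ds K Y"
  then obtain K where K: "K \<in> index_lists (length ds)" "Y \<subseteq> info_set ds K" "good_at ds K Y"
    by blast
  have "dnf_holds ds v Y" if "v \<in> Y" for v
  proof -
    obtain k where "k \<in> set K" "v \<in> fst (ds ! k)"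
      using K(2) \<open>v \<in> Y\<close> by (auto simp: info_set_def)
    moreover have "modal_part_holds (ds ! k) Y" if "k \<in> set K" for k
      using K(2,3) that by (fastforce simp: modal_part_holds_def good_at_def info_set_def)
    ultimately show ?thesis
      using index_lists_bound[OF K(1)] by (auto simp: dnf_holds_def)
  qed
  then show "supports ds Y"
    by (simp add: supports_def)
qed

lemma good_at_mono: "Y \<subseteq> X \<Longrightarrow> good_at ds K Y \<Longrightarrow> good_at ds K X"
  unfolding good_at_def by blast

lemma supports_info_set:
  assumes "K \<in> index_lists (length ds)" "good_at ds K X"
  shows "supports ds (X \<inter> info_set ds K)"
  using assms unfolding supports_iff_good_at good_at_def by blast

lemma maximal_support_iff_max_at:
  "maximal_support ds X Y \<longleftrightarrow> (\<exists>K\<in>index_lists (length ds). max_at ds K X \<and> Y = X \<inter> info_set ds K)"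
proof
  assume max: "maximal_support ds X Y"
  then obtain K where K: "K \<in> index_lists (length ds)" "Y \<subseteq> info_set ds K" "good_at ds K Y"
    by (auto simp: maximal_support_def supports_iff_good_at)
  have "good_at ds K X"
    using good_at_mono K(3) max by (auto simp: maximal_support_def)
  then have "\<not> Y \<subset> X \<inter> info_set ds K"
    using max supports_info_set[OF K(1)] by (auto simp: maximal_support_def)
  then have "Y = X \<inter> info_set ds K"
    using max K(2) by (auto simp: maximal_support_def)
  moreover have "\<not> good_at ds L X"
    if "L \<in> index_lists (length ds)" "X \<inter> info_set ds K \<subset> X \<inter> info_set ds L" for L
  proof
    assume "good_at ds L X"
    then have "supports ds (X \<inter> info_set ds L)"
      by (rule supports_info_set[OF that(1)])
    then show False
      using max that(2) \<open>Y = X \<inter> info_set ds K\<close> by (auto simp: maximal_support_def)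
  qed
  ultimately show "\<exists>K\<in>index_lists (length ds). max_at ds K X \<and> Y = X \<inter> info_set ds K"
    using K(1) \<open>good_at ds K X\<close> by (auto simp: max_at_def)
next
  assume "\<exists>K\<in>index_lists (length ds). max_at ds K X \<and> Y = X \<inter> info_set ds K"
  then obtain K where K: "K \<in> index_lists (length ds)" "max_at ds K X" and Y: "Y = X \<inter> info_set ds K"
    by blast
  have "\<not> Y \<subset> Y'" if "Y' \<subseteq> X" "supports ds Y'" for Y'
  proof
    assume "Y \<subset> Y'"
    obtain L where L: "L \<in> index_lists (length ds)" "Y' \<subseteq> info_set ds L" "good_at ds L Y'"
      using \<open>supports ds Y'\<close> by (auto simp: supports_iff_good_at)
    have "X \<inter> info_set ds K \<subset> X \<inter> info_set ds L"
      using \<open>Y \<subset> Y'\<close> \<open>Y' \<subseteq> X\<close> L(2) Y by blast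
    then show False
      using K(2) L(1) good_at_mono[OF \<open>Y' \<subseteq> X\<close> L(3)] by (auto simp: max_at_def)
  qed
  then show "maximal_support ds X Y"
    using K supports_info_set[OF K(1)] Y by (auto simp: maximal_support_def max_at_def)
qed

text \<open>The right-hand side is how \<open>\<lambda>\<^sup>*\<close> expresses a disjunction over \<open>\<Omega>\<close>: exactly one \<open>S\<close>,
  the set of all \<open>j\<close> with \<open>A j\<close>, passes the test \<open>state\<^sub>S\<close>.\<close>

lemma ex_index_iff_all_index_lists:
  "(\<exists>j<n. A j \<and> Q j) \<longleftrightarrow>
     (\<forall>S\<in>index_lists n. (\<forall>s\<in>set S. A s) \<and> (\<forall>s<n. s \<notin> set S \<longrightarrow> \<not> A s) \<longrightarrow> (\<exists>s\<in>set S. Q s))"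
proof
  assume "\<exists>j<n. A j \<and> Q j"
  then show "\<forall>S\<in>index_lists n. (\<forall>s\<in>set S. A s) \<and> (\<forall>s<n. s \<notin> set S \<longrightarrow> \<not> A s) \<longrightarrow> (\<exists>s\<in>set S. Q s)"
    by blast
next
  assume all: "\<forall>S\<in>index_lists n. (\<forall>s\<in>set S. A s) \<and> (\<forall>s<n. s \<notin> set S \<longrightarrow> \<not> A s) \<longrightarrow> (\<exists>s\<in>set S. Q s)"
  obtain S where "S \<in> index_lists n" "set S = {j. j < n \<and> A j}"
    by (rule index_lists_exhaust[of "{j. j < n \<and> A j}"]) auto
  with all show "\<exists>j<n. A j \<and> Q j"
    by force
qed

definition truth_set :: "('p \<Rightarrow> 'w set) \<Rightarrow> 'p fm \<Rightarrow> 'w set" where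
  "truth_set V \<phi> = {u. sat V u {} \<phi>}"

lemma sat_nonmodal: "nonmodal \<phi> \<Longrightarrow> sat V u Y \<phi> \<longleftrightarrow> u \<in> truth_set V \<phi>"
  by (induction \<phi>) (auto simp: truth_set_def)

definition dnf_sets :: "('p \<Rightarrow> 'w set) \<Rightarrow> 'p dnf \<Rightarrow> ('w set \<times> 'w set \<times> 'w set list) list" where
  "dnf_sets V = map (\<lambda>(\<pi>, \<beta>, \<gamma>s). (truth_set V \<pi>, truth_set V \<beta>, map (truth_set V) \<gamma>s))"

lemma length_dnf_sets [simp]: "length (dnf_sets V ts) = length ts"
  by (simp add: dnf_sets_def)

lemma dnf_sets_nth:
  "k < length ts \<Longrightarrow> dnf_sets V ts ! k =
     (truth_set V (fst (ts ! k)), truth_set V (fst (snd (ts ! k))), map (truth_set V) (snd (snd (ts ! k))))"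
  by (simp add: dnf_sets_def split_beta)

lemma dnf_nonmodal_nth:
  assumes "dnf_nonmodal ts" "k < length ts"
  shows "nonmodal (fst (ts ! k))" "nonmodal (fst (snd (ts ! k)))"
    "\<gamma> \<in> set (snd (snd (ts ! k))) \<Longrightarrow> nonmodal \<gamma>"
  using assms nth_mem[OF assms(2)] by (auto simp: dnf_nonmodal_def split_beta)

lemma sat_disjunct_fm:
  assumes "dnf_nonmodal ts" "k < length ts"
  shows "sat V v Y (disjunct_fm (ts ! k)) \<longleftrightarrow>
    v \<in> fst (dnf_sets V ts ! k) \<and> modal_part_holds (dnf_sets V ts ! k) Y"
  using dnf_nonmodal_nth[OF assms] assms(2)
  by (auto simp: modal_part_holds_def disjunct_fm_def split_beta dnf_sets_nth sat_nonmodal)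

lemma sat_dnf_fm:
  assumes "dnf_nonmodal ts"
  shows "sat V v Y (dnf_fm ts) \<longleftrightarrow> dnf_holds (dnf_sets V ts) v Y"
proof -
  have "sat V v Y (dnf_fm ts) \<longleftrightarrow> (\<exists>k<length ts. sat V v Y (disjunct_fm (ts ! k)))"
    by (simp add: dnf_fm_def) (metis in_set_conv_nth)
  then show ?thesis
    by (simp add: dnf_holds_def sat_disjunct_fm[OF assms] cong: conj_cong)
qed

lemma sat_dnf_nth:
  assumes "dnf_nonmodal ts" "k < length ts"
  shows "sat V u Y (fst (ts ! k)) \<longleftrightarrow> u \<in> fst (dnf_sets V ts ! k)"
    and "sat V u Y (fst (snd (ts ! k))) \<longleftrightarrow> u \<in> fst (snd (dnf_sets V ts ! k))"
    and "(\<forall>\<gamma>\<in>set (snd (snd (ts ! k))). \<exists>u\<in>Y. P u \<and> sat V u Z \<gamma>) \<longleftrightarrow>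
      (\<forall>G\<in>set (snd (snd (dnf_sets V ts ! k))). \<exists>u\<in>Y. P u \<and> u \<in> G)"
  using dnf_nonmodal_nth[OF assms] assms(2) by (simp_all add: dnf_sets_nth sat_nonmodal)

lemma nonmodal_info:
  "dnf_nonmodal ts \<Longrightarrow> K \<in> index_lists (length ts) \<Longrightarrow> nonmodal (info ts K)"
  unfolding info_def
  by (auto simp: index_lists_bound dnf_nonmodal_nth)

lemma sat_info:
  assumes "dnf_nonmodal ts" "K \<in> index_lists (length ts)"
  shows "sat V v Y (info ts K) \<longleftrightarrow> v \<in> info_set (dnf_sets V ts) K"
  using assms by (simp add: info_def info_set_def index_lists_bound sat_dnf_nth)

lemma sat_good:
  assumes "dnf_nonmodal ts" "K \<in> index_lists (length ts)"
  shows "sat V w Y (good ts K) \<longleftrightarrow> good_at (dnf_sets V ts) K Y"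
  using assms by (auto simp: good_def good_at_def index_lists_bound sat_dnf_nth sat_info)

lemma sat_maxf:
  assumes "dnf_nonmodal ts" "K \<in> index_lists (length ts)"
  shows "sat V w X (maxf ts K) \<longleftrightarrow> max_at (dnf_sets V ts) K X"
  using assms by (auto simp: maxf_def max_at_def sat_good sat_info)

lemma sat_state:
  assumes "dnf_nonmodal os" "S \<in> index_lists (length os)"
  shows "sat V v X (state os S) \<longleftrightarrow>
    (\<forall>s\<in>set S. v \<in> fst (dnf_sets V os ! s)) \<and> (\<forall>s<length os. s \<notin> set S \<longrightarrow> v \<notin> fst (dnf_sets V os ! s))"
  using assms by (auto simp: state_def index_lists_bound sat_dnf_nth)

lemma modal_part_holds_Int:
  "modal_part_holds d (X \<inter> I) \<longleftrightarrow>
    (\<forall>u\<in>X. u \<in> I \<longrightarrow> u \<in> fst (snd d)) \<and> (\<forall>G\<in>set (snd (snd d)). \<exists>u\<in>X. u \<in> I \<and> u \<in> G)"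
  by (auto simp: modal_part_holds_def)

lemma sat_star:
  assumes "dnf_nonmodal ts" "dnf_nonmodal os"
  shows "sat V w X (star ts os) \<longleftrightarrow>
    (\<forall>K\<in>index_lists (length ts). max_at (dnf_sets V ts) K X \<longrightarrow>
       supports (dnf_sets V os) (X \<inter> info_set (dnf_sets V ts) K))"
proof -
  let ?A = "dnf_sets V ts" and ?B = "dnf_sets V os"
  have "sat V w X (star ts os) \<longleftrightarrow>
    (\<forall>K\<in>index_lists (length ts). max_at ?A K X \<longrightarrow>
       (\<forall>v\<in>X. v \<in> info_set ?A K \<longrightarrow> (\<forall>S\<in>index_lists (length os).
          (\<forall>s\<in>set S. v \<in> fst (?B ! s)) \<and> (\<forall>s<length os. s \<notin> set S \<longrightarrow> v \<notin> fst (?B ! s)) \<longrightarrow>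
          (\<exists>s\<in>set S. modal_part_holds (?B ! s) (X \<inter> info_set ?A K)))))"
    using assms
    by (simp add: star_def modal_part_holds_Int sat_maxf sat_info sat_state index_lists_bound
        sat_dnf_nth)
  also have "\<dots> \<longleftrightarrow> (\<forall>K\<in>index_lists (length ts). max_at ?A K X \<longrightarrow> supports ?B (X \<inter> info_set ?A K))"
    by (auto simp: supports_def dnf_holds_def ex_index_iff_all_index_lists)
  finally show ?thesis .
qed

lemma sat_Cond:
  assumes "\<And>v Y. sat V v Y \<phi> \<longleftrightarrow> dnf_holds A v Y" "\<And>v Y. sat V v Y \<psi> \<longleftrightarrow> dnf_holds B v Y"
  shows "sat V w X (Cond \<phi> \<psi>) \<longleftrightarrow> (\<forall>Y. maximal_support A X Y \<longrightarrow> supports B Y)"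
proof -
  have "Y \<subseteq> {v \<in> Y. sat V v Y \<phi>} \<longleftrightarrow> supports A Y" for Y
    by (auto simp: supports_def assms(1))
  moreover have "(\<forall>v\<in>Y. sat V v Y \<psi>) \<longleftrightarrow> supports B Y" for Y
    by (simp add: supports_def assms(2))
  ultimately show ?thesis
    by (simp only: sat.simps maximal_support_def)
qed

lemma sat_Cond_star:
  assumes "dnf_nonmodal ts" "dnf_nonmodal os"
    and "\<And>v Y. sat V v Y \<phi> \<longleftrightarrow> sat V v Y (dnf_fm ts)" "\<And>v Y. sat V v Y \<psi> \<longleftrightarrow> sat V v Y (dnf_fm os)"
  shows "sat V w X (Cond \<phi> \<psi>) \<longleftrightarrow> sat V w X (star ts os)"
proof -
  let ?A = "dnf_sets V ts" and ?B = "dnf_sets V os"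
  have "sat V w X (Cond \<phi> \<psi>) \<longleftrightarrow> (\<forall>Y. maximal_support ?A X Y \<longrightarrow> supports ?B Y)"
    by (rule sat_Cond) (simp_all add: assms sat_dnf_fm)
  also have "\<dots> \<longleftrightarrow>
      (\<forall>K\<in>index_lists (length ts). max_at ?A K X \<longrightarrow> supports ?B (X \<inter> info_set ?A K))"
    by (auto simp: maximal_support_iff_max_at)
  also have "\<dots> \<longleftrightarrow> sat V w X (star ts os)"
    by (simp add: sat_star assms(1,2))
  finally show ?thesis .
qed

lemma in_L_dnf_nth:
  assumes "dnf_nonmodal ts" "K \<in> index_lists (length ts)" "k \<in> set K"
  shows "in_L (fst (snd (ts ! k)))" "\<gamma> \<in> set (snd (snd (ts ! k))) \<Longrightarrow> in_L \<gamma>"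
  using dnf_nonmodal_nth[OF assms(1) index_lists_bound[OF assms(2,3)]] by (simp_all add: nonmodal_imp_in_L)

lemma in_L_good:
  assumes "dnf_nonmodal ts" "K \<in> index_lists (length ts)"
  shows "in_L (good ts K)"
  using assms nonmodal_imp_in_L[OF nonmodal_info[OF assms]] by (auto simp: good_def in_L_dnf_nth)

lemma in_L_maxf:
  assumes "dnf_nonmodal ts" "K \<in> index_lists (length ts)"
  shows "in_L (maxf ts K)"
  using assms
  by (simp add: maxf_def in_L_good nonmodal_info nonmodal_imp_in_L)

lemma nonmodal_state:
  assumes "dnf_nonmodal os" "S \<in> index_lists (length os)"
  shows "nonmodal (state os S)"
  using assms
  by (simp add: state_def index_lists_bound dnf_nonmodal_nth)

lemma in_L_star:
  assumes "dnf_nonmodal ts" "dnf_nonmodal os"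
  shows "in_L (star ts os)"
  using assms
  by (simp add: star_def in_L_maxf nonmodal_info nonmodal_state nonmodal_imp_in_L in_L_dnf_nth)

lemma dnf_nonmodal_NF: "is_NF nf \<Longrightarrow> in_L \<chi> \<Longrightarrow> dnf_nonmodal (nf \<chi>)"
  by (simp add: is_NF_def)

lemma sat_NF: "is_NF nf \<Longrightarrow> in_L \<chi> \<Longrightarrow> sat V w X \<chi> \<longleftrightarrow> sat V w X (dnf_fm (nf \<chi>))"
  using K45_sound[of "Iff \<chi> (dnf_fm (nf \<chi>))"] by (simp add: is_NF_def)

lemma in_L_dagger: "is_NF nf \<Longrightarrow> in_L (dagger nf \<delta>)"
  by (induction \<delta>) (simp_all add: in_L_star dnf_nonmodal_NF)

lemma sat_dagger:
  assumes "is_NF nf"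
  shows "sat V w X \<delta> \<longleftrightarrow> sat V w X (dagger nf \<delta>)"
proof (induction \<delta> arbitrary: w X)
  case (Cond \<phi> \<psi>)
  have L: "in_L (dagger nf \<phi>)" "in_L (dagger nf \<psi>)"
    using in_L_dagger[OF assms] by blast+
  show ?case
    unfolding dagger.simps
    by (rule sat_Cond_star)
      (simp_all add: dnf_nonmodal_NF[OF assms] L Cond.IH sat_NF[OF assms L(1)] sat_NF[OF assms L(2)])
qed simp_all

theorem theorem12:
  fixes nf :: "'p fm \<Rightarrow> 'p dnf" and \<delta> :: "'p fm"
  assumes "is_NF nf"
  shows "in_L (dagger nf \<delta>) \<and>
    (\<forall>(W :: 'w set) V w X. W \<noteq> {} \<and> (\<forall>p. V p \<subseteq> W) \<and> w \<in> W \<and> X \<subseteq> W \<longrightarrow>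
        (sat V w X \<delta> \<longleftrightarrow> sat V w X (dagger nf \<delta>)))"
  using in_L_dagger[OF assms] by (simp add: sat_dagger[OF assms, where \<delta> = \<delta>])

end
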